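(* Let $H$ be a graph with at least one edge, let $0<\delta\leq 1/4$, let $G$ be a $\delta$-dense graph, and let $A,B\subseteq V(G)$ be disjoint independent sets of $G$ such that $|A|\geq |B|\geq 1$, every vertex of $A$ is adjacent to every vertex of $V(G)\setminus A$, and every vertex of $B$ is adjacent to every vertex of $V(G)\setminus B$. Let $G_A$ be obtained from $G$ by deleting one vertex of $A$, and $G_B$ be obtained from $G$ by deleting one vertex of $B$. Then $$\mathrm{inj}(H,G_A)\geq \mathrm{inj}(H,G_B)+2e(H)\,(|A|-|B|)\bigl(1-3\delta\, v(H)^3\bigr)\, v(G)^{v(H)-2}.$$
   Context: $v(G)$ and $e(G)$ denote the numbers of vertices and edges of $G$. A graph $G$ is $\delta$-dense if $\deg(v)\geq (1-\delta)v(G)$ for every $v\in V(G)$. A map $\varphi:V(H)\to V(G)$ is a homomorphism from $H$ to $G$ if $\varphi(u)\varphi(v)\in E(G)$ for every $uv\in E(H)$; $\mathrm{inj}(H,G)$ denotes the number of injective homomorphisms from $H$ to $G$. *)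

theory Defs
  imports Complex_Main "HOL-Library.FuncSet"
begin

definition graph :: "'a set \<Rightarrow> 'a set set \<Rightarrow> bool" where
  "graph V E \<longleftrightarrow> finite V \<and> (\<forall>e\<in>E. e \<subseteq> V \<and> card e = 2)"

definition degree :: "'a set \<Rightarrow> 'a set set \<Rightarrow> 'a \<Rightarrow> nat" where
  "degree V E v = card {u\<in>V. {u, v} \<in> E}"

definition dense :: "real \<Rightarrow> 'a set \<Rightarrow> 'a set set \<Rightarrow> bool" where
  "dense \<delta> V E \<longleftrightarrow> (\<forall>v\<in>V. real (degree V E v) \<ge> (1 - \<delta>) * real (card V))"

definition independent :: "'a set set \<Rightarrow> 'a set \<Rightarrow> bool" where
  "independent E A \<longleftrightarrow> (\<forall>u\<in>A. \<forall>v\<in>A. {u, v} \<notin> E)"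

definition is_hom :: "'b set \<Rightarrow> 'b set set \<Rightarrow> 'a set \<Rightarrow> 'a set set \<Rightarrow> ('b \<Rightarrow> 'a) \<Rightarrow> bool" where
  "is_hom VH EH VG EG \<phi> \<longleftrightarrow> \<phi> \<in> VH \<rightarrow> VG \<and> (\<forall>u\<in>VH. \<forall>v\<in>VH. {u, v} \<in> EH \<longrightarrow> {\<phi> u, \<phi> v} \<in> EG)"

definition inj_hom :: "'b set \<Rightarrow> 'b set set \<Rightarrow> 'a set \<Rightarrow> 'a set set \<Rightarrow> nat" where
  "inj_hom VH EH VG EG = card {\<phi> \<in> VH \<rightarrow>\<^sub>E VG. is_hom VH EH VG EG \<phi> \<and> inj_on \<phi> VH}"

definition del_vert_V :: "'a set \<Rightarrow> 'a \<Rightarrow> 'a set" where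
  "del_vert_V V x = V - {x}"

definition del_vert_E :: "'a set set \<Rightarrow> 'a \<Rightarrow> 'a set set" where
  "del_vert_E E x = {e\<in>E. x \<notin> e}"

end

theory Submission
  imports Defs
begin

text \<open>
  Let R = V(G) - (A \<union> B). Since |B - {b}| \<le> |A - {a}|, there is an involution \<rho> of V(G) exchanging
  a with b and B - {b} with a part C of A - {a}, and fixing R and Y = A - {a} - C, so |Y| = |A| - |B|.
  As A and B are independent classes of twins, \<rho> maps every edge of G - b to an edge of G - a,
  except the edges between B - {b} and Y. Composing with \<rho> the injective homomorphisms H \<rightarrow> G - b
  that use a, and keeping the others, therefore injects them into the injective homomorphisms
  H \<rightarrow> G - a, except for at most v(H) 2e(H) |B| |Y| n^(v(H)-3) bad maps. The image misses every
  homomorphism sending an edge wu of H to b and a vertex of Y. Extending the injective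
  homomorphisms of H - {w, u} into the dense graph G[R] gives at least
  2e(H) |Y| (1 - O(\<delta> v(H)^2)) n^(v(H)-2) of these, while |B| \<le> |A| \<le> \<delta> n makes the bad maps a
  correction of the same order.
\<close>

section \<open>Counting maps\<close>

lemma card_PiE_pinned:
  assumes "finite S" "T \<subseteq> S" "\<And>z. z \<in> T \<Longrightarrow> F z \<subseteq> R"
  shows "card {\<phi> \<in> S \<rightarrow>\<^sub>E R. \<forall>z\<in>T. \<phi> z \<in> F z} = (\<Prod>z\<in>T. card (F z)) * card R ^ (card S - card T)"
proof -
  let ?F = "\<lambda>z. if z \<in> T then F z else R"
  have "{\<phi> \<in> S \<rightarrow>\<^sub>E R. \<forall>z\<in>T. \<phi> z \<in> F z} = PiE S ?F"
    using assms by (fastforce simp: PiE_iff extensional_def split: if_split_asm)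
  also have "card \<dots> = (\<Prod>z\<in>S - T. card R) * (\<Prod>z\<in>T. card (F z))"
    using assms by (simp add: card_PiE prod.subset_diff[of T S])
  finally show ?thesis
    using assms by (simp add: card_Diff_subset finite_subset)
qed

lemma card_PiE_related_pair_le:
  assumes S: "finite S" and R: "finite R" and xy: "x \<in> S" "y \<in> S" "x \<noteq> y"
    and D: "\<forall>c\<in>R. real (card {d\<in>R. P c d}) \<le> D"
  shows "real (card {\<phi> \<in> S \<rightarrow>\<^sub>E R. P (\<phi> x) (\<phi> y)}) \<le> D * real (card R) ^ (card S - 1)"
proof -
  define F where "F c = (\<lambda>z. if z = x then {c} else {d\<in>R. P c d})" for c
  define Q where "Q c = {\<phi> \<in> S \<rightarrow>\<^sub>E R. \<forall>z\<in>{x, y}. \<phi> z \<in> F c z}" for c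
  have card_S: "card S - 1 = Suc (card S - 2)"
  proof -
    have "card {x, y} \<le> card S" using xy S by (intro card_mono) auto
    then show ?thesis using xy by simp
  qed
  have card_Q: "real (card (Q c)) \<le> D * real (card R) ^ (card S - 2)" if "c \<in> R" for c
  proof -
    have "card (Q c) = card {d\<in>R. P c d} * card R ^ (card S - 2)"
      unfolding Q_def using S xy that by (subst card_PiE_pinned) (auto simp: F_def numeral_2_eq_2)
    then show ?thesis
      using D that by (simp add: mult_right_mono)
  qed
  have cover: "{\<phi> \<in> S \<rightarrow>\<^sub>E R. P (\<phi> x) (\<phi> y)} \<subseteq> (\<Union>c\<in>R. Q c)"
    using xy by (auto simp: Q_def F_def PiE_iff)
  have "(\<Union>c\<in>R. Q c) \<subseteq> S \<rightarrow>\<^sub>E R"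
    by (auto simp: Q_def)
  then have "finite (\<Union>c\<in>R. Q c)"
    using S R by (blast intro: finite_subset finite_PiE)
  then have "card {\<phi> \<in> S \<rightarrow>\<^sub>E R. P (\<phi> x) (\<phi> y)} \<le> card (\<Union>c\<in>R. Q c)"
    using cover by (rule card_mono)
  also have "\<dots> \<le> (\<Sum>c\<in>R. card (Q c))"
    using R by (rule card_UN_le)
  also have "real \<dots> \<le> (\<Sum>c\<in>R. D * real (card R) ^ (card S - 2))"
    unfolding of_nat_sum using card_Q by (rule sum_mono)
  finally show ?thesis
    using card_S by (simp add: mult_ac)
qed

definition inj_homs :: "'b set \<Rightarrow> 'b set set \<Rightarrow> 'a set \<Rightarrow> 'a set set \<Rightarrow> ('b \<Rightarrow> 'a) set" where
  "inj_homs VH EH VG EG = {\<phi> \<in> VH \<rightarrow>\<^sub>E VG. is_hom VH EH VG EG \<phi> \<and> inj_on \<phi> VH}"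

lemma inj_hom_eq_card: "inj_hom VH EH VG EG = card (inj_homs VH EH VG EG)"
  by (simp add: inj_hom_def inj_homs_def)

lemma inj_homs_del_vert:
  "inj_homs VH EH (VG - {x}) (del_vert_E EG x) = {\<phi> \<in> inj_homs VH EH VG EG. x \<notin> \<phi> ` VH}"
  by (auto simp: inj_homs_def is_hom_def del_vert_E_def PiE_iff)

lemma inj_hom_lower_bound:
  assumes S: "finite S" and R: "finite R" and loopless: "\<And>x y. {x, y} \<in> EH \<Longrightarrow> x \<noteq> y"
    and D: "\<forall>c\<in>R. real (card {d\<in>R. {c, d} \<notin> EG}) \<le> D" "0 \<le> D"
  shows "real (card R) ^ card S - real (card S) ^ 2 * (1 + D) * real (card R) ^ (card S - 1)
    \<le> real (inj_hom S EH R EG)"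
proof -
  \<comment> \<open>a map that is not an injective homomorphism collapses or breaks some pair of distinct vertices\<close>
  define Off where "Off = {p \<in> S \<times> S. fst p \<noteq> snd p}"
  define N where "N p = {\<phi> \<in> S \<rightarrow>\<^sub>E R. \<phi> (fst p) = \<phi> (snd p) \<or> {\<phi> (fst p), \<phi> (snd p)} \<notin> EG}" for p
  have cover: "S \<rightarrow>\<^sub>E R \<subseteq> inj_homs S EH R EG \<union> (\<Union>p\<in>Off. N p)"
    using loopless by (auto simp: inj_homs_def is_hom_def inj_on_def Off_def N_def)
  have card_N: "real (card (N p)) \<le> (1 + D) * real (card R) ^ (card S - 1)" if "p \<in> Off" for p
  proof (unfold N_def, rule card_PiE_related_pair_le[OF S R])
    show "\<forall>c\<in>R. real (card {d\<in>R. c = d \<or> {c, d} \<notin> EG}) \<le> 1 + D"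
    proof
      fix c assume "c \<in> R"
      have "card {d\<in>R. c = d \<or> {c, d} \<notin> EG} \<le> card (insert c {d\<in>R. {c, d} \<notin> EG})"
        using R by (intro card_mono) auto
      also have "\<dots> \<le> Suc (card {d\<in>R. {c, d} \<notin> EG})"
        using R by (simp add: card_insert_if)
      finally show "real (card {d\<in>R. c = d \<or> {c, d} \<notin> EG}) \<le> 1 + D"
        using D(1) \<open>c \<in> R\<close> by fastforce
    qed
  qed (use that in \<open>auto simp: Off_def\<close>)
  have card_Off: "card Off \<le> card S ^ 2"
    using card_mono[of "S \<times> S" Off] S by (auto simp: Off_def card_cartesian_product power2_eq_square)
  have "card (S \<rightarrow>\<^sub>E R) \<le> card (inj_homs S EH R EG \<union> (\<Union>p\<in>Off. N p))"
    using cover S R by (intro card_mono) (auto simp: inj_homs_def N_def Off_def finite_PiE)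
  also have "\<dots> \<le> card (inj_homs S EH R EG) + (\<Sum>p\<in>Off. card (N p))"
    using S by (intro order_trans[OF card_Un_le] add_left_mono card_UN_le) (simp add: Off_def)
  finally have "real (card R) ^ card S \<le> real (inj_hom S EH R EG) + (\<Sum>p\<in>Off. real (card (N p)))"
    using S by (simp add: card_PiE inj_hom_eq_card flip: of_nat_sum of_nat_power)
  moreover have "(\<Sum>p\<in>Off. real (card (N p))) \<le> real (card Off) * ((1 + D) * real (card R) ^ (card S - 1))"
    using sum_mono[OF card_N] by simp
  moreover have "\<dots> \<le> real (card S) ^ 2 * ((1 + D) * real (card R) ^ (card S - 1))"
    using card_Off D(2) by (intro mult_right_mono) (auto simp flip: of_nat_power)
  ultimately show ?thesis
    by (simp add: algebra_simps)
qed

lemma card_le_by_partial_injection: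
  assumes "finite P" "finite D" "finite Q" "inj_on f P" "f ` (P - D) \<subseteq> Q" "G \<subseteq> Q" "G \<inter> f ` P = {}"
  shows "card P + card G \<le> card Q + card D"
proof -
  have "card P \<le> card (P - D) + card D"
    using card_Int_Diff[OF assms(1), of D] card_mono[OF assms(2), of "P \<inter> D"] by simp
  moreover have "card (P - D) = card (f ` (P - D))"
    using assms(4) by (intro card_image[symmetric]) (auto intro: inj_on_subset)
  moreover have "card (f ` (P - D)) + card G \<le> card Q"
  proof -
    have "card (f ` (P - D)) + card G = card (f ` (P - D) \<union> G)"
      using assms(1,3,6,7) by (intro card_Un_disjoint[symmetric]) (auto intro: finite_subset)
    also have "\<dots> \<le> card Q"
      using assms(3,5,6) by (intro card_mono) auto
    finally show ?thesis .
  qed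
  ultimately show ?thesis
    by linarith
qed

lemma obtain_involution_swapping:
  assumes "finite X" "finite Y" "card X \<le> card Y" "X \<inter> Y = {}"
  obtains \<rho> C where "C \<subseteq> Y" "card C = card X" "\<And>z. \<rho> (\<rho> z) = z"
    "\<And>x. x \<in> X \<Longrightarrow> \<rho> x \<in> C" "\<And>c. c \<in> C \<Longrightarrow> \<rho> c \<in> X" "\<And>z. z \<notin> X \<union> C \<Longrightarrow> \<rho> z = z"
proof -
  obtain \<tau> where \<tau>: "\<tau> ` X \<subseteq> Y" "inj_on \<tau> X"
    using card_le_inj[OF assms(1-3)] by blast
  define C where "C = \<tau> ` X"
  define \<rho> where "\<rho> z = (if z \<in> X then \<tau> z else if z \<in> C then the_inv_into X \<tau> z else z)" for z
  have XC: "X \<inter> C = {}"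
    using \<tau>(1) assms(4) by (auto simp: C_def)
  have to_C: "\<rho> x \<in> C" if "x \<in> X" for x
    using that by (simp add: \<rho>_def C_def)
  have to_X: "\<rho> c \<in> X" if "c \<in> C" for c
    using that XC \<tau>(2) by (auto simp: \<rho>_def C_def the_inv_into_into)
  have "\<rho> (\<rho> z) = z" for z
  proof -
    consider "z \<in> X" | "z \<in> C" | "z \<notin> X \<union> C"
      by blast
    then show ?thesis
    proof cases
      case 1
      then show ?thesis
        using to_C XC \<tau>(2) by (auto simp: \<rho>_def the_inv_into_f_f)
    next
      case 2
      then show ?thesis
        using to_X XC \<tau>(2) by (auto simp: \<rho>_def C_def f_the_inv_into_f)
    qed (simp add: \<rho>_def)
  qed
  moreover have "card C = card X"
    using \<tau>(2) by (simp add: C_def card_image)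
  moreover have "\<rho> z = z" if "z \<notin> X \<union> C" for z
    using that by (simp add: \<rho>_def)
  ultimately show ?thesis
    using that[of C \<rho>] \<tau>(1) to_C to_X by (simp add: C_def)
qed

section \<open>Graphs, arcs and density\<close>

lemma graph_edge_distinct: "graph V E \<Longrightarrow> {x, y} \<in> E \<Longrightarrow> x \<noteq> y"
  by (fastforce simp: graph_def)

definition arcs :: "'b set \<Rightarrow> 'b set set \<Rightarrow> ('b \<times> 'b) set" where
  "arcs VH EH = {(u, v) \<in> VH \<times> VH. {u, v} \<in> EH}"

lemma finite_arcs: "finite VH \<Longrightarrow> finite (arcs VH EH)"
  unfolding arcs_def by (rule finite_subset[of _ "VH \<times> VH"]) auto

lemma card_arcs:
  fixes VH :: "'b set"
  assumes "graph VH EH"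
  shows "card (arcs VH EH) = 2 * card EH"
proof -
  have edge: "e \<subseteq> VH" "card e = 2" if "e \<in> EH" for e
    using assms that by (auto simp: graph_def)
  have "finite EH"
    using assms edge(1) by (meson PowI finite_Pow_iff finite_subset graph_def subsetI)
  define orient :: "'b set \<Rightarrow> ('b \<times> 'b) set" where "orient e = {(u, v). {u, v} = e}" for e
  have card_orient: "card (orient e) = 2" if e: "e \<in> EH" for e
  proof -
    obtain u v where "e = {u, v}" "u \<noteq> v"
      using edge(2)[OF e] by (auto simp: card_2_iff)
    then have "orient e = {(u, v), (v, u)}"
      by (auto simp: orient_def doubleton_eq_iff)
    then show ?thesis
      using \<open>u \<noteq> v\<close> by simp
  qed
  have "arcs VH EH = (\<Union>e\<in>EH. orient e)"
    using edge(1) by (auto simp: arcs_def orient_def)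
  also have "card \<dots> = (\<Sum>e\<in>EH. card (orient e))"
  proof (rule card_UN_disjoint[OF \<open>finite EH\<close>])
    show "\<forall>e\<in>EH. finite (orient e)"
      using card_orient by (metis card_ge_0_finite zero_less_numeral)
  qed (auto simp: orient_def)
  finally show ?thesis
    using card_orient by simp
qed

lemma card_non_neighbours_le:
  assumes "dense \<delta> VG EG" "finite VG" "c \<in> VG"
  shows "real (card {d\<in>VG. {c, d} \<notin> EG}) \<le> \<delta> * real (card VG)"
proof -
  have "{d\<in>VG. {c, d} \<notin> EG} = VG - {u\<in>VG. {u, c} \<in> EG}"
    by (auto simp: insert_commute)
  then have "card {d\<in>VG. {c, d} \<notin> EG} = card VG - degree VG EG c"
    using assms(2) by (simp add: card_Diff_subset degree_def)
  moreover have "degree VG EG c \<le> card VG"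
    unfolding degree_def using assms(2) by (intro card_mono) auto
  moreover have "(1 - \<delta>) * real (card VG) \<le> real (degree VG EG c)"
    using assms(1,3) by (simp add: dense_def)
  ultimately show ?thesis
    by (simp add: algebra_simps)
qed

lemma density_error_estimate:
  fixes n r \<delta> :: real and m :: nat
  assumes "0 \<le> r" "r \<le> n" "(1 - 2 * \<delta>) * n \<le> r" "1 \<le> \<delta> * n" "0 < \<delta>" "\<delta> \<le> 1/4"
  shows "(1 - 3 * \<delta> * real (m + 2) ^ 3) * n ^ m
    \<le> r ^ m - real m ^ 2 * (1 + \<delta> * n) * r ^ (m - 1) - real (m + 2) * \<delta> * n ^ m"
proof -
  have "0 \<le> n"
    using assms by linarith
  have "(1 - 2 * \<delta> * real m) * n ^ m \<le> (1 - 2 * \<delta>) ^ m * n ^ m"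
    using Bernoulli_inequality[of "- 2 * \<delta>" m] assms(6) \<open>0 \<le> n\<close>
    by (intro mult_right_mono) (auto simp: algebra_simps)
  also have "\<dots> \<le> r ^ m"
    using assms(3,6) \<open>0 \<le> n\<close> by (simp add: power_mult_distrib[symmetric] power_mono)
  finally have main: "(1 - 2 * \<delta> * real m) * n ^ m \<le> r ^ m" .
  have error: "real m ^ 2 * (1 + \<delta> * n) * r ^ (m - 1) \<le> 2 * \<delta> * real m ^ 2 * n ^ m"
  proof (cases m)
    case (Suc k)
    have "real m ^ 2 * (1 + \<delta> * n) * r ^ (m - 1) \<le> real m ^ 2 * (2 * \<delta> * n) * n ^ (m - 1)"
      using assms(1,2,4) \<open>0 \<le> n\<close> by (intro mult_mono power_mono) auto
    then show ?thesis
      using Suc by (simp add: mult_ac)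
  qed simp
  have "2 * real m + 2 * real m ^ 2 + real (m + 2) \<le> 3 * real (m + 2) ^ 3"
    by (simp add: power2_eq_square power3_eq_cube algebra_simps)
  then have "\<delta> * n ^ m * (2 * real m + 2 * real m ^ 2 + real (m + 2)) \<le> \<delta> * n ^ m * (3 * real (m + 2) ^ 3)"
    using assms(5) \<open>0 \<le> n\<close> by (intro mult_left_mono) auto
  then show ?thesis
    using main error by (simp add: algebra_simps)
qed

section \<open>Two classes of twins and the switching involution\<close>

locale clone_pair =
  fixes VG :: "'a set" and EG :: "'a set set" and A B :: "'a set" and a b :: 'a
  assumes finite_VG: "finite VG"
    and A_subset: "A \<subseteq> VG" and B_subset: "B \<subseteq> VG" and disjoint: "A \<inter> B = {}"
    and independent_A: "independent EG A" and independent_B: "independent EG B"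
    and A_complete: "\<forall>x\<in>A. \<forall>y\<in>VG - A. {x, y} \<in> EG"
    and B_complete: "\<forall>x\<in>B. \<forall>y\<in>VG - B. {x, y} \<in> EG"
    and a_in_A: "a \<in> A" and b_in_B: "b \<in> B" and card_B_le_A: "card B \<le> card A"
begin

lemma edge_iff_sides:
  assumes "x \<in> A \<union> B" "y \<in> VG"
  shows "{x, y} \<in> EG \<longleftrightarrow> \<not> (x \<in> A \<and> y \<in> A) \<and> \<not> (x \<in> B \<and> y \<in> B)"
  using assms disjoint independent_A independent_B A_complete B_complete
  by (auto simp: independent_def)

text \<open>
  An involution exchanging a with b and B - {b} with a part C of A - {a}, fixing Y = A - {a} - C and
  every vertex outside A \<union> B. The last clause avoids naming C: a vertex of A \<union> B - {b} changes
  sides exactly when it is not in Y.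
\<close>

definition switch :: "('a \<Rightarrow> 'a) \<Rightarrow> 'a set \<Rightarrow> bool" where
  "switch \<rho> Y \<longleftrightarrow> Y \<subseteq> A - {a} \<and> (\<forall>z. \<rho> (\<rho> z) = z) \<and> \<rho> a = b \<and> (\<forall>z\<in>VG - (A \<union> B). \<rho> z = z)
    \<and> (\<forall>z\<in>A \<union> B - {b}. \<rho> z \<in> A \<union> B \<and> (\<rho> z \<in> A \<longleftrightarrow> (z \<in> A \<longleftrightarrow> z \<in> Y)))"

lemma switchD:
  assumes "switch \<rho> Y"
  shows "Y \<subseteq> A - {a}" "\<rho> (\<rho> z) = z" "\<rho> a = b" "z \<in> VG - (A \<union> B) \<Longrightarrow> \<rho> z = z"
    and "z \<in> A \<union> B - {b} \<Longrightarrow> \<rho> z \<in> A \<union> B"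
    and "z \<in> A \<union> B - {b} \<Longrightarrow> \<rho> z \<in> A \<longleftrightarrow> (z \<in> A \<longleftrightarrow> z \<in> Y)"
  using assms unfolding switch_def by blast+

lemma switch_fun_upd:
  assumes C: "C \<subseteq> A - {a}" "\<And>z. \<rho>0 (\<rho>0 z) = z"
    "\<And>x. x \<in> B - {b} \<Longrightarrow> \<rho>0 x \<in> C" "\<And>c. c \<in> C \<Longrightarrow> \<rho>0 c \<in> B - {b}"
    "\<And>z. z \<notin> (B - {b}) \<union> C \<Longrightarrow> \<rho>0 z = z"
  shows "switch (\<rho>0(a := b, b := a)) (A - {a} - C)"
proof -
  define \<rho> where "\<rho> = \<rho>0(a := b, b := a)"
  define Y where "Y = A - {a} - C"
  have ab: "a \<noteq> b" "a \<notin> B" "b \<notin> A"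
    using a_in_A b_in_B disjoint by auto
  have fixes_ab: "\<rho>0 a = a" "\<rho>0 b = b"
    using C(1,5) ab by blast+
  have avoids_ab: "\<rho>0 z \<noteq> a" "\<rho>0 z \<noteq> b" if "z \<noteq> a" "z \<noteq> b" for z
    using that C(2) fixes_ab by metis+
  have "\<rho> (\<rho> z) = z" for z
    using ab fixes_ab avoids_ab[of z] C(2)[of z] by (auto simp: \<rho>_def)
  moreover have "\<rho> z = z" if "z \<in> VG - (A \<union> B)" for z
    using that C(1,5) a_in_A b_in_B by (auto simp: \<rho>_def)
  moreover have "\<rho> z \<in> A \<union> B \<and> (\<rho> z \<in> A \<longleftrightarrow> (z \<in> A \<longleftrightarrow> z \<in> Y))" if z: "z \<in> A \<union> B - {b}" for z
  proof -
    consider "z = a" | "z \<in> B - {b}" | "z \<in> C" | "z \<in> Y"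
      using z Y_def by blast
    then show ?thesis
    proof cases
      case 2
      then show ?thesis
        using C(1,3) ab disjoint by (auto simp: \<rho>_def Y_def)
    next
      case 3
      then show ?thesis
        using C(1,4) ab disjoint by (auto simp: \<rho>_def Y_def)
    next
      case 4
      then have "z \<notin> (B - {b}) \<union> C" "z \<noteq> a" "z \<noteq> b" "z \<in> A"
        using disjoint ab by (auto simp: Y_def)
      then show ?thesis
        using C(5)[of z] 4 by (simp add: \<rho>_def)
    qed (use ab a_in_A b_in_B in \<open>simp add: \<rho>_def Y_def\<close>)
  qed
  moreover have "Y \<subseteq> A - {a}" "\<rho> a = b"
    using ab by (auto simp: Y_def \<rho>_def)
  ultimately show ?thesis
    unfolding switch_def \<rho>_def[symmetric] Y_def[symmetric] by blast
qed

lemma obtain_switch: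
  obtains \<rho> Y where "switch \<rho> Y" "card Y = card A - card B"
proof -
  have fin: "finite A" "finite B"
    using finite_VG A_subset B_subset by (auto intro: finite_subset)
  have "card (B - {b}) \<le> card (A - {a})"
    using fin card_B_le_A a_in_A b_in_B by simp
  moreover have "(B - {b}) \<inter> (A - {a}) = {}"
    using disjoint by blast
  ultimately obtain \<rho>0 C where C: "C \<subseteq> A - {a}" "card C = card (B - {b})" "\<And>z. \<rho>0 (\<rho>0 z) = z"
    "\<And>x. x \<in> B - {b} \<Longrightarrow> \<rho>0 x \<in> C" "\<And>c. c \<in> C \<Longrightarrow> \<rho>0 c \<in> B - {b}"
    "\<And>z. z \<notin> (B - {b}) \<union> C \<Longrightarrow> \<rho>0 z = z"
    using fin by (metis obtain_involution_swapping finite_Diff)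
  moreover have "card (A - {a} - C) = card A - card B"
  proof -
    have "0 < card B"
      using fin(2) b_in_B card_gt_0_iff by blast
    then show ?thesis
      using C(1,2) fin a_in_A b_in_B by (simp add: card_Diff_subset finite_subset)
  qed
  ultimately show ?thesis
    using that switch_fun_upd by blast
qed

lemma switch_maps:
  assumes "switch \<rho> Y" "z \<in> VG - {b}"
  shows "\<rho> z \<in> VG - {a}"
proof -
  have "\<rho> z \<in> VG"
    using switchD(4,5)[OF assms(1), of z] assms(2) A_subset B_subset by (cases "z \<in> A \<union> B") auto
  moreover have "\<rho> z \<noteq> a"
    using switchD(2,3)[OF assms(1)] assms(2) by (metis Diff_iff insert_iff)
  ultimately show ?thesis
    by simp
qed

lemma switch_preserves_edge:
  assumes "switch \<rho> Y" "x \<in> VG - {b}" "y \<in> VG - {b}" "{x, y} \<in> EG"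
    and "\<not> (x \<in> B \<and> y \<in> Y)" "\<not> (y \<in> B \<and> x \<in> Y)"
  shows "{\<rho> x, \<rho> y} \<in> EG"
proof -
  have \<rho>: "\<rho> x \<in> VG" "\<rho> y \<in> VG"
    using switch_maps assms(1-3) by blast+
  have sides: "\<rho> z \<in> A \<union> B \<and> (\<rho> z \<in> A \<longleftrightarrow> (z \<in> A \<longleftrightarrow> z \<in> Y))" if "z \<in> A \<union> B - {b}" for z
    using switchD(5,6)[OF assms(1) that] by blast
  have fixed: "\<rho> z = z" if "z \<in> VG - (A \<union> B)" for z
    using switchD(4)[OF assms(1) that] .
  have Y: "Y \<subseteq> A"
    using switchD(1)[OF assms(1)] by blast
  have across: "{p, q} \<in> EG \<longleftrightarrow> (p \<in> A \<longleftrightarrow> q \<notin> A)" if "p \<in> A \<union> B" "q \<in> A \<union> B" for p q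
    using that edge_iff_sides[of p q] A_subset B_subset disjoint by auto
  have outside: "{p, q} \<in> EG" "{q, p} \<in> EG" if "p \<in> A \<union> B" "q \<in> VG - (A \<union> B)" for p q
    using that edge_iff_sides[of p q] by (auto simp: insert_commute)
  consider "x \<in> A \<union> B" "y \<in> A \<union> B" | "x \<in> A \<union> B" "y \<notin> A \<union> B" | "x \<notin> A \<union> B" "y \<in> A \<union> B"
    | "x \<notin> A \<union> B" "y \<notin> A \<union> B"
    by blast
  then show ?thesis
  proof cases
    case 1
    have "x \<in> A \<longleftrightarrow> y \<notin> A"
      using 1 across assms(4) by blast
    then have "x \<notin> Y" "y \<notin> Y"
      using 1 assms(5,6) Y by auto
    then have "\<rho> x \<in> A \<longleftrightarrow> \<rho> y \<notin> A" "\<rho> x \<in> A \<union> B" "\<rho> y \<in> A \<union> B"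
      using 1 assms(2,3) sides[of x] sides[of y] \<open>x \<in> A \<longleftrightarrow> y \<notin> A\<close> by auto
    then show ?thesis
      using across by blast
  next
    case 2
    then show ?thesis
      using assms(2,3) sides[of x] fixed[of y] outside(1) by auto
  next
    case 3
    then show ?thesis
      using assms(2,3) sides[of y] fixed[of x] outside(2) by auto
  next
    case 4
    then show ?thesis
      using assms(2-4) fixed by auto
  qed
qed

lemma switch_inj:
  assumes "switch \<rho> Y"
  shows "inj \<rho>"
  using switchD(2)[OF assms] by (metis injI)

text \<open>Only maps using \<open>a\<close> are switched; the others already avoid both \<open>a\<close> and \<open>b\<close>.\<close>

definition switched :: "('a \<Rightarrow> 'a) \<Rightarrow> 'b set \<Rightarrow> ('b \<Rightarrow> 'a) \<Rightarrow> 'b \<Rightarrow> 'a" where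
  "switched \<rho> VH \<phi> = (if a \<in> \<phi> ` VH then restrict (\<rho> \<circ> \<phi>) VH else \<phi>)"

definition bad :: "'b set \<Rightarrow> 'b set set \<Rightarrow> 'a set \<Rightarrow> ('b \<Rightarrow> 'a) set" where
  "bad VH EH Y = {\<phi> \<in> VH \<rightarrow>\<^sub>E VG. a \<in> \<phi> ` VH \<and> (\<exists>(u, v)\<in>arcs VH EH. \<phi> u \<in> B - {b} \<and> \<phi> v \<in> Y)}"

definition good :: "'b set \<Rightarrow> 'b set set \<Rightarrow> 'a set \<Rightarrow> ('b \<Rightarrow> 'a) set" where
  "good VH EH Y = {\<psi> \<in> inj_homs VH EH (VG - {a}) (del_vert_E EG a). \<exists>(w, u)\<in>arcs VH EH. \<psi> w = b \<and> \<psi> u \<in> Y}"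

lemma switched_in_inj_homs:
  assumes \<rho>: "switch \<rho> Y" and \<phi>: "\<phi> \<in> inj_homs VH EH (VG - {b}) (del_vert_E EG b)" "\<phi> \<notin> bad VH EH Y"
  shows "switched \<rho> VH \<phi> \<in> inj_homs VH EH (VG - {a}) (del_vert_E EG a)"
proof (cases "a \<in> \<phi> ` VH")
  case True
  have vals: "\<phi> z \<in> VG - {b}" if "z \<in> VH" for z
    using \<phi>(1) that by (auto simp: inj_homs_def PiE_iff)
  have edges: "{\<phi> u, \<phi> v} \<in> EG" if "u \<in> VH" "v \<in> VH" "{u, v} \<in> EH" for u v
    using \<phi>(1) that by (auto simp: inj_homs_def is_hom_def del_vert_E_def)
  have no_bad: "\<not> (\<phi> u \<in> B \<and> \<phi> v \<in> Y)" if "u \<in> VH" "v \<in> VH" "{u, v} \<in> EH" for u v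
    using \<phi> True that vals by (auto simp: bad_def arcs_def inj_homs_def)
  have "restrict (\<rho> \<circ> \<phi>) VH \<in> VH \<rightarrow>\<^sub>E VG - {a}"
    using vals switch_maps[OF \<rho>] by auto
  moreover have "inj_on (restrict (\<rho> \<circ> \<phi>) VH) VH"
    using \<phi>(1) switch_inj[OF \<rho>] by (auto simp: inj_homs_def inj_on_def inj_def)
  moreover have "{\<rho> (\<phi> u), \<rho> (\<phi> v)} \<in> EG" if "u \<in> VH" "v \<in> VH" "{u, v} \<in> EH" for u v
    using that vals edges no_bad[of u v] no_bad[of v u]
    by (intro switch_preserves_edge[OF \<rho>]) (auto simp: insert_commute)
  ultimately show ?thesis
    unfolding switched_def inj_homs_del_vert using True by (auto simp: inj_homs_def is_hom_def)
next
  case False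
  then show ?thesis
    using \<phi>(1) by (simp add: switched_def inj_homs_del_vert)
qed

lemma b_in_switched_image:
  assumes "switch \<rho> Y" "\<phi> \<in> VH \<rightarrow> VG - {b}"
  shows "b \<in> switched \<rho> VH \<phi> ` VH \<longleftrightarrow> a \<in> \<phi> ` VH"
proof (cases "a \<in> \<phi> ` VH")
  case True
  then obtain w where "w \<in> VH" "\<phi> w = a"
    by blast
  then have "switched \<rho> VH \<phi> w = b"
    using True switchD(3)[OF assms(1)] by (simp add: switched_def)
  then show ?thesis
    using True \<open>w \<in> VH\<close> by blast
next
  case False
  then show ?thesis
    using assms(2) by (auto simp: switched_def)
qed

lemma inj_on_switched:
  assumes \<rho>: "switch \<rho> Y"
  shows "inj_on (switched \<rho> VH) (inj_homs VH EH (VG - {b}) (del_vert_E EG b))"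
proof (rule inj_onI)
  fix \<phi>1 \<phi>2
  assume "\<phi>1 \<in> inj_homs VH EH (VG - {b}) (del_vert_E EG b)" "\<phi>2 \<in> inj_homs VH EH (VG - {b}) (del_vert_E EG b)"
    and eq: "switched \<rho> VH \<phi>1 = switched \<rho> VH \<phi>2"
  then have \<phi>: "\<phi>1 \<in> VH \<rightarrow>\<^sub>E VG - {b}" "\<phi>2 \<in> VH \<rightarrow>\<^sub>E VG - {b}"
    by (auto simp: inj_homs_def)
  have "b \<in> switched \<rho> VH \<phi>1 ` VH \<longleftrightarrow> a \<in> \<phi>1 ` VH" "b \<in> switched \<rho> VH \<phi>2 ` VH \<longleftrightarrow> a \<in> \<phi>2 ` VH"
    using \<phi> by (auto intro!: b_in_switched_image[OF \<rho>] simp: PiE_iff)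
  then have same: "a \<in> \<phi>1 ` VH \<longleftrightarrow> a \<in> \<phi>2 ` VH"
    using eq by simp
  show "\<phi>1 = \<phi>2"
  proof (cases "a \<in> \<phi>1 ` VH")
    case True
    then have restr: "restrict (\<rho> \<circ> \<phi>1) VH = restrict (\<rho> \<circ> \<phi>2) VH"
      using eq same by (simp add: switched_def)
    have "\<phi>1 z = \<phi>2 z" if "z \<in> VH" for z
    proof -
      have "\<rho> (\<phi>1 z) = \<rho> (\<phi>2 z)"
        using fun_cong[OF restr, of z] that by simp
      then show ?thesis
        using switch_inj[OF \<rho>] by (simp add: inj_eq)
    qed
    then show ?thesis
      using \<phi> by (rule PiE_ext[rotated 2])
  next
    case False
    then show ?thesis
      using eq same by (simp add: switched_def)
  qed
qed

lemma good_disjoint_switched: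
  assumes \<rho>: "switch \<rho> Y"
  shows "good VH EH Y \<inter> switched \<rho> VH ` inj_homs VH EH (VG - {b}) (del_vert_E EG b) = {}"
proof (rule ccontr)
  assume "\<not> ?thesis"
  then obtain \<phi> w u where \<phi>: "\<phi> \<in> inj_homs VH EH (VG - {b}) (del_vert_E EG b)" and wu: "(w, u) \<in> arcs VH EH"
    and images: "switched \<rho> VH \<phi> w = b" "switched \<rho> VH \<phi> u \<in> Y"
    by (auto simp: good_def)
  have vals: "\<phi> w \<in> VG - {b}" "\<phi> u \<in> VG - {b}" "{\<phi> w, \<phi> u} \<in> EG"
    using \<phi> wu by (auto simp: inj_homs_def is_hom_def del_vert_E_def arcs_def PiE_iff)
  then have "a \<in> \<phi> ` VH"
    using images(1) wu by (auto simp: switched_def arcs_def split: if_splits)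
  then have "\<rho> (\<phi> w) = b" "\<rho> (\<phi> u) \<in> Y"
    using images wu by (auto simp: switched_def arcs_def)
  then have "\<phi> w = a"
    using switchD(2,3)[OF \<rho>] by metis
  have "\<rho> (\<phi> u) \<in> A \<union> B - {b}" "\<rho> (\<phi> u) \<in> A" "\<rho> (\<phi> u) \<in> Y"
    using \<open>\<rho> (\<phi> u) \<in> Y\<close> switchD(1)[OF \<rho>] b_in_B disjoint by auto
  then have "\<phi> u \<in> A"
    using switchD(6)[OF \<rho>, of "\<rho> (\<phi> u)"] switchD(2)[OF \<rho>] by simp
  with \<open>\<phi> w = a\<close> show False
    using vals(3) a_in_A independent_A by (auto simp: independent_def)
qed

lemma switching_count:
  assumes \<rho>: "switch \<rho> Y" and "finite VH"
  shows "card (inj_homs VH EH (VG - {b}) (del_vert_E EG b)) + card (good VH EH Y)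
    \<le> card (inj_homs VH EH (VG - {a}) (del_vert_E EG a)) + card (bad VH EH Y)"
proof (rule card_le_by_partial_injection)
  have fin: "finite (VH \<rightarrow>\<^sub>E V)" if "V \<subseteq> VG" for V
    using assms(2) finite_VG that by (simp add: finite_PiE finite_subset)
  show "finite (inj_homs VH EH (VG - {b}) (del_vert_E EG b))" "finite (bad VH EH Y)"
    "finite (inj_homs VH EH (VG - {a}) (del_vert_E EG a))"
    by (auto simp: inj_homs_def bad_def intro: finite_subset[OF _ fin])
  show "switched \<rho> VH ` (inj_homs VH EH (VG - {b}) (del_vert_E EG b) - bad VH EH Y)
      \<subseteq> inj_homs VH EH (VG - {a}) (del_vert_E EG a)"
    using switched_in_inj_homs[OF \<rho>] by blast
  show "good VH EH Y \<subseteq> inj_homs VH EH (VG - {a}) (del_vert_E EG a)"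
    by (auto simp: good_def)
  show "inj_on (switched \<rho> VH) (inj_homs VH EH (VG - {b}) (del_vert_E EG b))"
    by (rule inj_on_switched[OF \<rho>])
  show "good VH EH Y \<inter> switched \<rho> VH ` inj_homs VH EH (VG - {b}) (del_vert_E EG b) = {}"
    by (rule good_disjoint_switched[OF \<rho>])
qed

lemma card_maps_through_a_le:
  assumes VH: "finite VH" and wuv: "w \<in> VH" "u \<in> VH" "v \<in> VH"
    and Y: "Y \<subseteq> A - {a}" and B: "real (card B) \<le> \<delta> * real (card VG)"
  shows "real (card {\<phi> \<in> VH \<rightarrow>\<^sub>E VG. \<phi> w = a \<and> \<phi> u \<in> B - {b} \<and> \<phi> v \<in> Y})
    \<le> real (card Y) * \<delta> * real (card VG) ^ (card VH - 2)"
proof (cases "w \<noteq> u \<and> w \<noteq> v \<and> u \<noteq> v")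
  case True
  define F where "F z = (if z = w then {a} else if z = u then B - {b} else Y)" for z
  have "{\<phi> \<in> VH \<rightarrow>\<^sub>E VG. \<phi> w = a \<and> \<phi> u \<in> B - {b} \<and> \<phi> v \<in> Y}
      = {\<phi> \<in> VH \<rightarrow>\<^sub>E VG. \<forall>z\<in>{w, u, v}. \<phi> z \<in> F z}"
    using True by (auto simp: F_def)
  also have "card \<dots> = card (B - {b}) * card Y * card VG ^ (card VH - 3)"
    using VH wuv True Y a_in_A A_subset B_subset
    by (subst card_PiE_pinned) (auto simp: F_def numeral_3_eq_3)
  finally have "real (card {\<phi> \<in> VH \<rightarrow>\<^sub>E VG. \<phi> w = a \<and> \<phi> u \<in> B - {b} \<and> \<phi> v \<in> Y})
      = real (card (B - {b})) * real (card Y) * real (card VG) ^ (card VH - 3)"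
    by simp
  also have "\<dots> \<le> \<delta> * real (card VG) * real (card Y) * real (card VG) ^ (card VH - 3)"
    using B card_Diff1_le[of B b] by (intro mult_right_mono) auto
  also have "\<dots> = real (card Y) * \<delta> * real (card VG) ^ (card VH - 2)"
  proof -
    have "card {w, u, v} \<le> card VH"
      using wuv VH by (intro card_mono) auto
    then have "card VH - 2 = Suc (card VH - 3)"
      using True by simp
    then show ?thesis
      by simp
  qed
  finally show ?thesis .
next
  case False
  have "0 < card B"
    using b_in_B B_subset finite_VG by (auto simp: card_gt_0_iff intro: finite_subset)
  then have "0 \<le> \<delta>"
    using B by (smt (verit) mult_nonpos_nonneg of_nat_0_le_iff of_nat_0_less_iff)
  have empty: "{\<phi> \<in> VH \<rightarrow>\<^sub>E VG. \<phi> w = a \<and> \<phi> u \<in> B - {b} \<and> \<phi> v \<in> Y} = {}"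
    using False Y a_in_A disjoint by auto
  show ?thesis
    unfolding empty using \<open>0 \<le> \<delta>\<close> by simp
qed

lemma card_bad_le:
  assumes VH: "finite VH" and Y: "Y \<subseteq> A - {a}" and B: "real (card B) \<le> \<delta> * real (card VG)"
  shows "real (card (bad VH EH Y))
    \<le> real (card VH) * real (card (arcs VH EH)) * (real (card Y) * \<delta> * real (card VG) ^ (card VH - 2))"
proof -
  define P where "P w p = {\<phi> \<in> VH \<rightarrow>\<^sub>E VG. \<phi> w = a \<and> \<phi> (fst p) \<in> B - {b} \<and> \<phi> (snd p) \<in> Y}" for w p
  have "bad VH EH Y \<subseteq> (\<Union>w\<in>VH. \<Union>p\<in>arcs VH EH. P w p)"
  proof
    fix \<phi> assume "\<phi> \<in> bad VH EH Y"
    then obtain w u v where "\<phi> \<in> VH \<rightarrow>\<^sub>E VG" "w \<in> VH" "\<phi> w = a" "(u, v) \<in> arcs VH EH"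
      "\<phi> u \<in> B - {b}" "\<phi> v \<in> Y"
      by (auto simp: bad_def)
    then show "\<phi> \<in> (\<Union>w\<in>VH. \<Union>p\<in>arcs VH EH. P w p)"
      unfolding P_def by force
  qed
  moreover have "finite (\<Union>w\<in>VH. \<Union>p\<in>arcs VH EH. P w p)"
    using VH finite_VG finite_arcs[OF VH] by (auto simp: P_def finite_PiE)
  ultimately have "card (bad VH EH Y) \<le> card (\<Union>w\<in>VH. \<Union>p\<in>arcs VH EH. P w p)"
    by (rule card_mono[rotated])
  also have "\<dots> \<le> (\<Sum>w\<in>VH. \<Sum>p\<in>arcs VH EH. card (P w p))"
    using VH finite_arcs[OF VH] by (intro order_trans[OF card_UN_le] sum_mono card_UN_le)
  finally have "real (card (bad VH EH Y)) \<le> (\<Sum>w\<in>VH. \<Sum>p\<in>arcs VH EH. real (card (P w p)))"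
    by (simp flip: of_nat_sum)
  also have "\<dots> \<le> (\<Sum>w\<in>VH. \<Sum>p\<in>arcs VH EH. real (card Y) * \<delta> * real (card VG) ^ (card VH - 2))"
    unfolding P_def using card_maps_through_a_le[OF VH _ _ _ Y B]
    by (intro sum_mono) (auto simp: arcs_def)
  finally show ?thesis
    by simp
qed

lemma extension_classes:
  assumes "w \<noteq> u" "x \<in> A" "\<phi> \<in> VH - {w, u} \<rightarrow>\<^sub>E VG - (A \<union> B)" "z \<in> VH"
  shows "(\<phi>(w := b, u := x)) z = b \<longleftrightarrow> z = w" "(\<phi>(w := b, u := x)) z \<in> A \<longleftrightarrow> z = u"
    and "(\<phi>(w := b, u := x)) z \<in> B \<longleftrightarrow> z = w"
proof -
  have "\<phi> z \<notin> A \<union> B" if "z \<noteq> w" "z \<noteq> u"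
    using assms(3,4) that by (auto simp: PiE_iff)
  then show "(\<phi>(w := b, u := x)) z = b \<longleftrightarrow> z = w" "(\<phi>(w := b, u := x)) z \<in> A \<longleftrightarrow> z = u"
    "(\<phi>(w := b, u := x)) z \<in> B \<longleftrightarrow> z = w"
    using assms(1,2) b_in_B disjoint by auto
qed

lemma inj_on_extension_map:
  assumes "w \<noteq> u" "x \<in> A" "\<phi> \<in> VH - {w, u} \<rightarrow>\<^sub>E VG - (A \<union> B)" "inj_on \<phi> (VH - {w, u})"
  shows "inj_on (\<phi>(w := b, u := x)) VH"
proof (rule inj_onI)
  note classes = extension_classes[OF assms(1-3)]
  fix p q assume pq: "p \<in> VH" "q \<in> VH" "(\<phi>(w := b, u := x)) p = (\<phi>(w := b, u := x)) q"
  show "p = q"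
  proof (cases "p \<in> {w, u}")
    case True
    then show ?thesis
      using pq classes[of p] classes[of q] by auto
  next
    case False
    then have "q \<notin> {w, u}"
      using pq classes[of p] classes[of q] by auto
    then have "\<phi> p = \<phi> q"
      using False pq(3) by simp
    then show ?thesis
      using False \<open>q \<notin> {w, u}\<close> pq(1,2) inj_onD[OF assms(4)] by blast
  qed
qed

lemma extension_in_good:
  assumes H: "graph VH EH" and wu: "(w, u) \<in> arcs VH EH" and x: "x \<in> Y" "Y \<subseteq> A - {a}"
    and \<phi>: "\<phi> \<in> inj_homs (VH - {w, u}) EH (VG - (A \<union> B)) EG"
  shows "\<phi>(w := b, u := x) \<in> good VH EH Y"
proof -
  define \<psi> where "\<psi> = \<phi>(w := b, u := x)"
  have wu': "w \<in> VH" "u \<in> VH" "{w, u} \<in> EH" "w \<noteq> u"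
    using wu graph_edge_distinct[OF H] by (auto simp: arcs_def)
  have x': "x \<in> A" "x \<noteq> a" "x \<in> VG"
    using x A_subset by auto
  have \<phi>': "\<phi> \<in> VH - {w, u} \<rightarrow>\<^sub>E VG - (A \<union> B)" "inj_on \<phi> (VH - {w, u})"
    "\<And>p q. p \<in> VH - {w, u} \<Longrightarrow> q \<in> VH - {w, u} \<Longrightarrow> {p, q} \<in> EH \<Longrightarrow> {\<phi> p, \<phi> q} \<in> EG"
    using \<phi> by (auto simp: inj_homs_def is_hom_def)
  note classes = extension_classes[OF wu'(4) x'(1) \<phi>'(1), folded \<psi>_def]
  have vals: "\<psi> z \<in> VG - {a}" if "z \<in> VH" for z
    using that \<phi>'(1) x' b_in_B B_subset a_in_A disjoint by (auto simp: \<psi>_def PiE_iff)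
  have "\<psi> \<in> VH \<rightarrow>\<^sub>E VG - {a}"
    using vals \<phi>'(1) wu' by (auto simp: \<psi>_def PiE_iff extensional_def)
  moreover have "inj_on \<psi> VH"
    unfolding \<psi>_def using wu'(4) x'(1) \<phi>'(1,2) by (rule inj_on_extension_map)
  moreover have "{\<psi> p, \<psi> q} \<in> EG" if "p \<in> VH" "q \<in> VH" "{p, q} \<in> EH" for p q
  proof -
    have "p \<noteq> q"
      using graph_edge_distinct[OF H that(3)] .
    have cross: "{\<psi> p, \<psi> q} \<in> EG" if "p \<in> VH" "q \<in> VH" "p \<noteq> q" "p \<in> {w, u}" for p q
      using that vals[of q] classes[of p] classes[of q] x' b_in_B disjoint
      by (subst edge_iff_sides) auto
    show ?thesis
      using that \<open>p \<noteq> q\<close> cross[of p q] cross[of q p] \<phi>'(3)[of p q]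
      by (cases "p \<in> {w, u} \<or> q \<in> {w, u}") (auto simp: \<psi>_def insert_commute)
  qed
  ultimately have "\<psi> \<in> inj_homs VH EH (VG - {a}) (del_vert_E EG a)"
    unfolding inj_homs_del_vert by (auto simp: inj_homs_def is_hom_def PiE_iff)
  moreover have "\<psi> w = b" "\<psi> u \<in> Y"
    using wu'(4) x(1) by (simp_all add: \<psi>_def)
  ultimately have "\<psi> \<in> good VH EH Y"
    using wu unfolding good_def by blast
  then show ?thesis
    by (simp add: \<psi>_def)
qed

lemma inj_on_extension:
  assumes H: "graph VH EH"
  shows "inj_on (\<lambda>((w, u), x, \<phi>). \<phi>(w := b, u := x))
    (SIGMA p:arcs VH EH. SIGMA x:A. VH - {fst p, snd p} \<rightarrow>\<^sub>E VG - (A \<union> B))"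
proof (rule inj_onI)
  fix q1 q2
  assume "q1 \<in> (SIGMA p:arcs VH EH. SIGMA x:A. VH - {fst p, snd p} \<rightarrow>\<^sub>E VG - (A \<union> B))"
    and "q2 \<in> (SIGMA p:arcs VH EH. SIGMA x:A. VH - {fst p, snd p} \<rightarrow>\<^sub>E VG - (A \<union> B))"
    and "(\<lambda>((w, u), x, \<phi>). \<phi>(w := b, u := x)) q1 = (\<lambda>((w, u), x, \<phi>). \<phi>(w := b, u := x)) q2"
  moreover obtain w1 u1 x1 \<phi>1 w2 u2 x2 \<phi>2 where "q1 = ((w1, u1), x1, \<phi>1)" "q2 = ((w2, u2), x2, \<phi>2)"
    by (metis prod.collapse)
  ultimately have q1: "(w1, u1) \<in> arcs VH EH" "x1 \<in> A" "\<phi>1 \<in> VH - {w1, u1} \<rightarrow>\<^sub>E VG - (A \<union> B)"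
    and q2: "(w2, u2) \<in> arcs VH EH" "x2 \<in> A" "\<phi>2 \<in> VH - {w2, u2} \<rightarrow>\<^sub>E VG - (A \<union> B)"
    and eq: "\<phi>1(w1 := b, u1 := x1) = \<phi>2(w2 := b, u2 := x2)"
    and q12: "q1 = ((w1, u1), x1, \<phi>1)" "q2 = ((w2, u2), x2, \<phi>2)"
    by auto
  have ne: "w1 \<noteq> u1" "w2 \<noteq> u2" and in_VH: "w1 \<in> VH" "u1 \<in> VH"
    using q1(1) q2(1) graph_edge_distinct[OF H] by (auto simp: arcs_def)
  note classes1 = extension_classes[OF ne(1) q1(2,3)] and classes2 = extension_classes[OF ne(2) q2(2,3)]
  have "w1 = w2"
    using classes1(1)[OF in_VH(1)] classes2(1)[OF in_VH(1)] eq by simp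
  moreover have "u1 = u2"
    using classes1(2)[OF in_VH(2)] classes2(2)[OF in_VH(2)] eq by simp
  moreover have "x1 = x2"
    using fun_cong[OF eq, of u1] ne \<open>u1 = u2\<close> by simp
  moreover have "\<phi>1 = \<phi>2"
  proof
    fix z
    show "\<phi>1 z = \<phi>2 z"
    proof (cases "z \<in> {w1, u1}")
      case True
      then show ?thesis
        using q1(3) q2(3) \<open>w1 = w2\<close> \<open>u1 = u2\<close> by (auto simp: PiE_def extensional_def)
    next
      case False
      then show ?thesis
        using fun_cong[OF eq, of z] \<open>w1 = w2\<close> \<open>u1 = u2\<close> by simp
    qed
  qed
  ultimately show "q1 = q2"
    using q12 by simp
qed

lemma card_good_ge:
  assumes H: "graph VH EH" and Y: "Y \<subseteq> A - {a}"
  shows "(\<Sum>p\<in>arcs VH EH. card Y * inj_hom (VH - {fst p, snd p}) EH (VG - (A \<union> B)) EG)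
    \<le> card (good VH EH Y)"
proof -
  define Z where "Z = (SIGMA p:arcs VH EH. SIGMA x:Y. inj_homs (VH - {fst p, snd p}) EH (VG - (A \<union> B)) EG)"
  have VH: "finite VH"
    using H by (simp add: graph_def)
  have fin_maps: "finite (S \<rightarrow>\<^sub>E V)" if "S \<subseteq> VH" "V \<subseteq> VG" for S V
    using VH finite_VG that by (simp add: finite_PiE finite_subset)
  have "(\<Sum>p\<in>arcs VH EH. card Y * inj_hom (VH - {fst p, snd p}) EH (VG - (A \<union> B)) EG) = card Z"
  proof -
    have "finite Y"
      using Y A_subset finite_VG by (meson Diff_subset finite_subset)
    moreover have "finite (inj_homs S EH (VG - (A \<union> B)) EG)" if "S \<subseteq> VH" for S
      using fin_maps[OF that, of "VG - (A \<union> B)"] by (auto simp: inj_homs_def intro: finite_subset)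
    ultimately show ?thesis
      unfolding Z_def using finite_arcs[OF VH] by (simp add: inj_hom_eq_card)
  qed
  also have "\<dots> \<le> card (good VH EH Y)"
  proof (rule card_inj_on_le)
    show "inj_on (\<lambda>((w, u), x, \<phi>). \<phi>(w := b, u := x)) Z"
      using Y by (intro inj_on_subset[OF inj_on_extension[OF H]]) (auto simp: Z_def inj_homs_def)
    show "(\<lambda>((w, u), x, \<phi>). \<phi>(w := b, u := x)) ` Z \<subseteq> good VH EH Y"
      using extension_in_good[OF H _ _ Y] by (auto simp: Z_def)
    show "finite (good VH EH Y)"
      using fin_maps[of VH "VG - {a}"] by (auto simp: good_def inj_homs_def intro: finite_subset)
  qed
  finally show ?thesis .
qed

lemma card_good_lower_bound:
  assumes H: "graph VH EH" and Y: "Y \<subseteq> A - {a}"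
    and D: "\<forall>c\<in>VG - (A \<union> B). real (card {d\<in>VG - (A \<union> B). {c, d} \<notin> EG}) \<le> D" "0 \<le> D"
  defines "r \<equiv> real (card (VG - (A \<union> B)))" and "m \<equiv> card VH - 2"
  shows "2 * real (card EH) * real (card Y) * (r ^ m - real m ^ 2 * (1 + D) * r ^ (m - 1))
    \<le> real (card (good VH EH Y))"
proof -
  have VH: "finite VH"
    using H by (simp add: graph_def)
  have "r ^ m - real m ^ 2 * (1 + D) * r ^ (m - 1) \<le> real (inj_hom (VH - {fst p, snd p}) EH (VG - (A \<union> B)) EG)"
    if "p \<in> arcs VH EH" for p
  proof -
    have "fst p \<in> VH" "snd p \<in> VH" "fst p \<noteq> snd p"
      using that graph_edge_distinct[OF H] by (auto simp: arcs_def)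
    then have "card (VH - {fst p, snd p}) = m"
      using VH by (simp add: m_def card_Diff_subset)
    then show ?thesis
      using inj_hom_lower_bound[where S = "VH - {fst p, snd p}" and R = "VG - (A \<union> B)" and D = D] VH finite_VG D
        graph_edge_distinct[OF H] by (simp add: r_def)
  qed
  then have "(\<Sum>p\<in>arcs VH EH. real (card Y) * (r ^ m - real m ^ 2 * (1 + D) * r ^ (m - 1)))
      \<le> (\<Sum>p\<in>arcs VH EH. real (card Y) * real (inj_hom (VH - {fst p, snd p}) EH (VG - (A \<union> B)) EG))"
    by (intro sum_mono mult_left_mono) auto
  also have "\<dots> \<le> real (card (good VH EH Y))"
    using card_good_ge[OF H Y] by (simp flip: of_nat_sum of_nat_mult)
  finally show ?thesis
    using card_arcs[OF H] by (simp add: mult_ac)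
qed

lemma dense_bounds:
  assumes "dense \<delta> VG EG"
  shows "real (card A) \<le> \<delta> * real (card VG)"
    and "\<forall>c\<in>VG - (A \<union> B). real (card {d\<in>VG - (A \<union> B). {c, d} \<notin> EG}) \<le> \<delta> * real (card VG)"
proof -
  have "A \<subseteq> {d\<in>VG. {a, d} \<notin> EG}"
    using A_subset a_in_A independent_A by (auto simp: independent_def)
  then have "card A \<le> card {d\<in>VG. {a, d} \<notin> EG}"
    using finite_VG by (intro card_mono) auto
  then show "real (card A) \<le> \<delta> * real (card VG)"
    using card_non_neighbours_le[OF assms finite_VG, of a] a_in_A A_subset by auto
  show "\<forall>c\<in>VG - (A \<union> B). real (card {d\<in>VG - (A \<union> B). {c, d} \<notin> EG}) \<le> \<delta> * real (card VG)"
  proof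
    fix c assume c: "c \<in> VG - (A \<union> B)"
    have "card {d\<in>VG - (A \<union> B). {c, d} \<notin> EG} \<le> card {d\<in>VG. {c, d} \<notin> EG}"
      using finite_VG by (intro card_mono) auto
    then show "real (card {d\<in>VG - (A \<union> B). {c, d} \<notin> EG}) \<le> \<delta> * real (card VG)"
      using card_non_neighbours_le[OF assms finite_VG, of c] c by auto
  qed
qed

lemma card_rest:
  "real (card (VG - (A \<union> B))) = real (card VG) - real (card A) - real (card B)"
proof -
  have fin: "finite A" "finite B"
    using finite_VG A_subset B_subset by (auto intro: finite_subset)
  then have "card (A \<union> B) = card A + card B"
    using disjoint by (simp add: card_Un_disjoint)
  moreover have "card (A \<union> B) \<le> card VG"
    using finite_VG A_subset B_subset by (intro card_mono) auto
  moreover have "card (VG - (A \<union> B)) = card VG - card (A \<union> B)"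
    using fin A_subset B_subset by (intro card_Diff_subset) auto
  ultimately show ?thesis
    by simp
qed

lemma density_error_estimate_rest:
  assumes "dense \<delta> VG EG" "0 < \<delta>" "\<delta> \<le> 1/4"
  defines "n \<equiv> real (card VG)" and "r \<equiv> real (card (VG - (A \<union> B)))"
  shows "(1 - 3 * \<delta> * real (m + 2) ^ 3) * n ^ m
    \<le> r ^ m - real m ^ 2 * (1 + \<delta> * n) * r ^ (m - 1) - real (m + 2) * \<delta> * n ^ m"
proof (rule density_error_estimate)
  have "1 \<le> card B"
    using b_in_B B_subset finite_VG by (metis One_nat_def Suc_leI card_gt_0_iff empty_iff finite_subset)
  moreover have "real (card A) \<le> \<delta> * n"
    using dense_bounds(1)[OF assms(1)] by (simp add: n_def)
  ultimately show "(1 - 2 * \<delta>) * n \<le> r" "1 \<le> \<delta> * n" "r \<le> n"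
    using card_rest card_B_le_A unfolding r_def n_def by (simp_all add: algebra_simps)
qed (use assms in \<open>auto simp: r_def\<close>)

lemma good_minus_bad_lower_bound:
  assumes H: "graph VH EH" "EH \<noteq> {}" and \<rho>: "switch \<rho> Y" "card Y = card A - card B"
    and \<delta>: "dense \<delta> VG EG" "0 < \<delta>" "\<delta> \<le> 1/4"
  shows "2 * real (card EH) * (real (card A) - real (card B)) * (1 - 3 * \<delta> * real (card VH) ^ 3)
      * real (card VG) ^ (card VH - 2)
    \<le> real (card (good VH EH Y)) - real (card (bad VH EH Y))"
proof -
  define n r m where "n = real (card VG)" and "r = real (card (VG - (A \<union> B)))" and "m = card VH - 2"
  define P where "P = 2 * real (card EH) * (real (card A) - real (card B))"
  have card_Y: "real (card Y) = real (card A) - real (card B)" "0 \<le> P"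
    using \<rho>(2) card_B_le_A by (simp_all add: P_def)
  have VH: "finite VH" "card VH = m + 2"
    using H graph_def card_mono[of VH] unfolding m_def by (metis all_not_in_conv le_add_diff_inverse2)+
  have "P * (r ^ m - real m ^ 2 * (1 + \<delta> * n) * r ^ (m - 1)) \<le> real (card (good VH EH Y))"
    using card_good_lower_bound[OF H(1) switchD(1)[OF \<rho>(1)] dense_bounds(2)[OF \<delta>(1)]] \<delta>(2)
    by (simp add: card_Y P_def r_def m_def n_def)
  moreover have "real (card (bad VH EH Y)) \<le> P * (real (m + 2) * \<delta> * n ^ m)"
    using card_bad_le[OF VH(1) switchD(1)[OF \<rho>(1)], of \<delta> EH] dense_bounds(1)[OF \<delta>(1)] card_B_le_A
      card_arcs[OF H(1)] card_Y VH(2)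
    by (simp add: P_def n_def algebra_simps)
  moreover have "P * ((1 - 3 * \<delta> * real (m + 2) ^ 3) * n ^ m)
      \<le> P * (r ^ m - real m ^ 2 * (1 + \<delta> * n) * r ^ (m - 1)) - P * (real (m + 2) * \<delta> * n ^ m)"
    using density_error_estimate_rest[OF \<delta>, of m] card_Y(2) unfolding n_def r_def
    by (simp add: mult_left_mono flip: right_diff_distrib)
  ultimately show ?thesis
    using VH(2) by (simp add: P_def n_def mult.assoc)
qed

end

theorem lemma2p3:
  fixes VH :: "'b set" and EH :: "'b set set"
    and VG :: "'a set" and EG :: "'a set set"
    and A B :: "'a set" and \<delta> :: real and a b :: 'a
  assumes H: "graph VH EH" and Hedge: "EH \<noteq> {}"
    and \<delta>pos: "0 < \<delta>" and \<delta>le: "\<delta> \<le> 1/4"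
    and G: "graph VG EG" and Gdense: "dense \<delta> VG EG"
    and AV: "A \<subseteq> VG" and BV: "B \<subseteq> VG" and disj: "A \<inter> B = {}"
    and indA: "independent EG A" and indB: "independent EG B"
    and card: "card A \<ge> card B" "card B \<ge> 1"
    and adjA: "\<forall>x\<in>A. \<forall>y\<in>VG - A. {x, y} \<in> EG"
    and adjB: "\<forall>x\<in>B. \<forall>y\<in>VG - B. {x, y} \<in> EG"
    and a: "a \<in> A" and b: "b \<in> B"
  shows "real (inj_hom VH EH (del_vert_V VG a) (del_vert_E EG a))
    \<ge> real (inj_hom VH EH (del_vert_V VG b) (del_vert_E EG b))
       + 2 * real (card EH) * (real (card A) - real (card B))
         * (1 - 3 * \<delta> * real (card VH) ^ 3) * real (card VG) ^ (card VH - 2)"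
proof -
  interpret clone_pair VG EG A B a b
    using G AV BV disj indA indB card(1) adjA adjB a b by unfold_locales (auto simp: graph_def)
  obtain \<rho> Y where \<rho>: "switch \<rho> Y" "card Y = card A - card B"
    by (rule obtain_switch)
  have "real (card (inj_homs VH EH (VG - {b}) (del_vert_E EG b))) + real (card (good VH EH Y))
      \<le> real (card (inj_homs VH EH (VG - {a}) (del_vert_E EG a))) + real (card (bad VH EH Y))"
    using switching_count[OF \<rho>(1), where VH = VH and EH = EH] H by (simp add: graph_def flip: of_nat_add)
  moreover have "2 * real (card EH) * (real (card A) - real (card B)) * (1 - 3 * \<delta> * real (card VH) ^ 3)
      * real (card VG) ^ (card VH - 2) \<le> real (card (good VH EH Y)) - real (card (bad VH EH Y))"
    using good_minus_bad_lower_bound[OF H Hedge \<rho> Gdense \<delta>pos \<delta>le] .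
  ultimately show ?thesis
    unfolding inj_hom_eq_card del_vert_V_def by linarith
qed

end
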